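(* Let $A = \mathrm{diag}(a_1,\dots,a_n)$ with $a_i > 0$ and $\Sigma$ a diagonal positive semidefinite matrix. Consider the noisy quadratic model with stochastic loss $\hat L(x) = \frac{1}{2}(x - c)^T A (x - c)$, $c \sim \mathcal{N}(0,\Sigma)$, and SGD with learning rate $\gamma > 0$: $x \mapsto x - \gamma A(x - c)$, with a fresh independent sample $c$ (independent of everything else) at each step. Lookahead with inner optimizer SGD, $k \geq 1$ inner steps and step size $\alpha \in (0,1]$ is defined by: given slow weights $\phi_t$ (a random vector), set $\theta_{t,0} = \phi_t$, $\theta_{t,i} = \theta_{t,i-1} - \gamma A(\theta_{t,i-1} - c_{t,i})$ for $i = 1,\dots,k$, and $\phi_{t+1} = (1-\alpha)\phi_t + \alpha\,\theta_{t,k}$. Then, writing $\mathbb{V}[\cdot]$ for the diagonal matrix of coordinatewise variances, $$\mathbb{E}[\phi_{t+1}] = \big[(1-\alpha)I + \alpha(I - \gamma A)^k\big]\mathbb{E}[\phi_t],$$ $$\mathbb{V}[\phi_{t+1}] = \big[(1-\alpha)I + \alpha(I-\gamma A)^k\big]^2 \mathbb{V}[\phi_t] + \alpha^2 \sum_{i=0}^{k-1}(I - \gamma A)^{2i}\gamma^2 A^2 \Sigma.$$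
   Context: All matrices involved are diagonal, so products and the formulas above act coordinatewise. *)

theory Defs
  imports "HOL-Probability.Probability"
begin

definition gauss1 :: "real \<Rightarrow> real measure" where
  "gauss1 s = (if s = 0 then return borel 0 else density lborel (normal_density 0 (sqrt s)))"

definition gauss_diag :: "('n::finite \<Rightarrow> real) \<Rightarrow> ('n \<Rightarrow> real) measure" where
  "gauss_diag \<sigma> = PiM UNIV (\<lambda>j. gauss1 (\<sigma> j))"

primrec la_inner :: "real \<Rightarrow> ('n \<Rightarrow> real) \<Rightarrow> (nat \<Rightarrow> 'a \<Rightarrow> 'n \<Rightarrow> real)
    \<Rightarrow> ('a \<Rightarrow> 'n \<Rightarrow> real) \<Rightarrow> nat \<Rightarrow> 'a \<Rightarrow> 'n \<Rightarrow> real" where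
  "la_inner \<gamma> a c \<phi> 0 = \<phi>"
| "la_inner \<gamma> a c \<phi> (Suc i) = (\<lambda>\<omega> j. la_inner \<gamma> a c \<phi> i \<omega> j
      - \<gamma> * a j * (la_inner \<gamma> a c \<phi> i \<omega> j - c (Suc i) \<omega> j))"

definition la_step :: "real \<Rightarrow> real \<Rightarrow> ('n \<Rightarrow> real) \<Rightarrow> (nat \<Rightarrow> 'a \<Rightarrow> 'n \<Rightarrow> real)
    \<Rightarrow> ('a \<Rightarrow> 'n \<Rightarrow> real) \<Rightarrow> nat \<Rightarrow> 'a \<Rightarrow> 'n \<Rightarrow> real" where
  "la_step \<alpha> \<gamma> a c \<phi> k = (\<lambda>\<omega> j. (1 - \<alpha>) * \<phi> \<omega> j + \<alpha> * la_inner \<gamma> a c \<phi> k \<omega> j)"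

end

theory Submission
  imports Defs
begin

text \<open>
  In each coordinate the inner SGD loop is affine in the slow weight and the noise samples:
  with b = 1 - \<gamma> a one has \<theta>_k = b^k \<phi> + \<Sum>_m b^(k-m) \<gamma> a c_m, hence
  \<phi>' = (1 - \<alpha> + \<alpha> b^k) \<phi> + \<Sum>_m \<alpha> b^(k-m) \<gamma> a c_m.
  The noise terms are centred with variance \<sigma>, independent of \<phi> and of each other, so the
  mean is multiplied by 1 - \<alpha> + \<alpha> b^k and, by Bienayme's identity, the variances add up
  with the squared weights.
\<close>

lemma prob_space_gauss1: "s \<ge> 0 \<Longrightarrow> prob_space (gauss1 s)"
  unfolding gauss1_def by (auto intro!: prob_space_return prob_space_normal_density)

lemma sets_gauss1: "sets (gauss1 s) = sets borel"
  unfolding gauss1_def by auto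

lemma has_bochner_integral_return:
  fixes f :: "'a \<Rightarrow> 'b::{banach, second_countable_topology}"
  assumes "x \<in> space M" "f \<in> borel_measurable M"
  shows "has_bochner_integral (return M x) f (f x)"
proof -
  interpret prob_space "return M x" by (rule prob_space_return) (rule assms(1))
  have "integrable (return M x) f"
    using integrable_cong_AE[of f "return M x" "\<lambda>_. f x"] assms by (simp add: AE_return)
  then show ?thesis
    by (simp add: has_bochner_integral_iff integral_return assms)
qed

lemma gauss1_mean:
  assumes "s \<ge> 0"
  shows "has_bochner_integral (gauss1 s) (\<lambda>x. x) 0"
proof (cases "s = 0")
  case True
  then show ?thesis
    using has_bochner_integral_return[of 0 borel "\<lambda>x::real. x"] by (simp add: gauss1_def)
next
  case False
  then have "0 < sqrt s"
    using assms by simp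
  then have "has_bochner_integral lborel (\<lambda>x. normal_density 0 (sqrt s) x *\<^sub>R x) 0"
    unfolding real_scaleR_def by (rule normal_moment_nz_1)
  then show ?thesis
    unfolding gauss1_def using False by (simp add: has_bochner_integral_density)
qed

lemma gauss1_second_moment:
  assumes "s \<ge> 0"
  shows "has_bochner_integral (gauss1 s) (\<lambda>x. x\<^sup>2) s"
proof (cases "s = 0")
  case True
  then show ?thesis
    using has_bochner_integral_return[of 0 borel "\<lambda>x::real. x\<^sup>2"] by (simp add: gauss1_def)
next
  case False
  then have "0 < sqrt s"
    using assms by simp
  from normal_moment_even[OF this, of 0 1]
  have "has_bochner_integral lborel (\<lambda>x. normal_density 0 (sqrt s) x *\<^sub>R x\<^sup>2) s"
    using False assms by simp
  then show ?thesis
    unfolding gauss1_def using False by (simp add: has_bochner_integral_density)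
qed

lemma (in prob_space) distr_component_gauss_diag:
  assumes "X \<in> measurable M (PiM UNIV (\<lambda>_. borel))"
    and "distr M (PiM UNIV (\<lambda>_. borel)) X = gauss_diag \<sigma>" and "\<And>j. \<sigma> j \<ge> 0"
  shows "distr M borel (\<lambda>\<omega>. X \<omega> j) = gauss1 (\<sigma> j)"
proof -
  have "distr M borel (\<lambda>\<omega>. X \<omega> j) = distr (distr M (PiM UNIV (\<lambda>_. borel)) X) borel (\<lambda>x. x j)"
    using assms(1) by (subst distr_distr) (auto simp: comp_def)
  also have "\<dots> = distr (PiM UNIV (\<lambda>j. gauss1 (\<sigma> j))) (gauss1 (\<sigma> j)) (\<lambda>x. x j)"
    unfolding assms(2) gauss_diag_def by (rule distr_cong) (auto simp: sets_gauss1)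
  also have "\<dots> = gauss1 (\<sigma> j)"
    by (rule distr_PiM_component) (auto intro: prob_space_gauss1 assms(3))
  finally show ?thesis .
qed

lemma (in prob_space) gauss_diag_component_moments:
  assumes "X \<in> measurable M (PiM UNIV (\<lambda>_. borel))"
    and "distr M (PiM UNIV (\<lambda>_. borel)) X = gauss_diag \<sigma>" and "\<And>j. \<sigma> j \<ge> 0"
  shows "expectation (\<lambda>\<omega>. X \<omega> j) = 0"
    and "integrable M (\<lambda>\<omega>. (X \<omega> j)\<^sup>2)"
    and "variance (\<lambda>\<omega>. X \<omega> j) = \<sigma> j"
proof -
  have X_j: "(\<lambda>\<omega>. X \<omega> j) \<in> borel_measurable M"
    using assms(1) by measurable
  have pull_back: "has_bochner_integral M (\<lambda>\<omega>. f (X \<omega> j)) v"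
    if "has_bochner_integral (gauss1 (\<sigma> j)) f v" "f \<in> borel_measurable borel" for f :: "real \<Rightarrow> real" and v
    using that X_j unfolding has_bochner_integral_iff distr_component_gauss_diag[OF assms, symmetric]
    by (simp add: integrable_distr_eq integral_distr)
  have mean: "has_bochner_integral M (\<lambda>\<omega>. X \<omega> j) 0"
    using pull_back[OF gauss1_mean[OF assms(3)]] by simp
  have square: "has_bochner_integral M (\<lambda>\<omega>. (X \<omega> j)\<^sup>2) (\<sigma> j)"
    using pull_back[OF gauss1_second_moment[OF assms(3)]] by simp
  show mean_zero: "expectation (\<lambda>\<omega>. X \<omega> j) = 0"
    using mean by (rule has_bochner_integral_integral_eq)
  show "integrable M (\<lambda>\<omega>. (X \<omega> j)\<^sup>2)"
    using square by (rule integrable.intros)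
  show "variance (\<lambda>\<omega>. X \<omega> j) = \<sigma> j"
    using has_bochner_integral_integral_eq[OF square] by (simp add: mean_zero)
qed

lemma (in prob_space) expectation_mult_indep_vars:
  fixes X :: "'i \<Rightarrow> 'a \<Rightarrow> real"
  assumes indep: "indep_vars (\<lambda>_. borel) X I" and "i \<in> I" "l \<in> I" "i \<noteq> l"
    and "integrable M (X i)" "integrable M (X l)"
  shows "integrable M (\<lambda>\<omega>. X i \<omega> * X l \<omega>)"
    and "expectation (\<lambda>\<omega>. X i \<omega> * X l \<omega>) = expectation (X i) * expectation (X l)"
proof -
  have pair: "indep_vars (\<lambda>_. borel) X {i, l}"
    by (rule indep_vars_subset[OF indep]) (use assms in auto)
  have "finite {i, l}" "\<And>m. m \<in> {i, l} \<Longrightarrow> integrable M (X m)"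
    using assms by auto
  from indep_vars_integrable[OF this(1) pair this(2)] indep_vars_lebesgue_integral[OF this(1) pair this(2)]
  show "integrable M (\<lambda>\<omega>. X i \<omega> * X l \<omega>)"
    and "expectation (\<lambda>\<omega>. X i \<omega> * X l \<omega>) = expectation (X i) * expectation (X l)"
    using \<open>i \<noteq> l\<close> by simp_all
qed

lemma (in prob_space) indep_vars_square_integrable_imp_integrable:
  fixes X :: "'i \<Rightarrow> 'a \<Rightarrow> real"
  assumes "indep_vars (\<lambda>_. borel) X I" "i \<in> I" "integrable M (\<lambda>\<omega>. (X i \<omega>)\<^sup>2)"
  shows "integrable M (X i)"
  using assms by (auto simp: indep_vars_def intro: square_integrable_imp_integrable)

lemma (in prob_space) covariance_indep_vars:
  fixes X :: "'i \<Rightarrow> 'a \<Rightarrow> real"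
  assumes indep: "indep_vars (\<lambda>_. borel) X I" and "i \<in> I" "l \<in> I"
    and square_int: "\<And>i. i \<in> I \<Longrightarrow> integrable M (\<lambda>\<omega>. (X i \<omega>)\<^sup>2)"
  shows "integrable M (\<lambda>\<omega>. (X i \<omega> - expectation (X i)) * (X l \<omega> - expectation (X l)))"
    and "expectation (\<lambda>\<omega>. (X i \<omega> - expectation (X i)) * (X l \<omega> - expectation (X l)))
      = (if i = l then variance (X i) else 0)"
proof -
  have int: "integrable M (X m)" if "m \<in> I" for m
    using indep_vars_square_integrable_imp_integrable[OF indep that square_int[OF that]] .
  define Y where "Y m \<omega> = X m \<omega> - expectation (X m)" for m \<omega>
  have "integrable M (\<lambda>\<omega>. Y i \<omega> * Y l \<omega>) \<and>
      expectation (\<lambda>\<omega>. Y i \<omega> * Y l \<omega>) = (if i = l then variance (X i) else 0)"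
  proof (cases "i = l")
    case True
    have "(\<lambda>\<omega>. Y i \<omega> * Y i \<omega>) = (\<lambda>\<omega>. (X i \<omega>)\<^sup>2 - 2 * expectation (X i) * X i \<omega> + (expectation (X i))\<^sup>2)"
      unfolding Y_def by (simp add: power2_eq_square algebra_simps)
    moreover have "integrable M (\<lambda>\<omega>. (X i \<omega>)\<^sup>2 - 2 * expectation (X i) * X i \<omega> + (expectation (X i))\<^sup>2)"
      using square_int[OF \<open>i \<in> I\<close>] int[OF \<open>i \<in> I\<close>] by simp
    moreover have "expectation (\<lambda>\<omega>. Y i \<omega> * Y i \<omega>) = variance (X i)"
      unfolding Y_def power2_eq_square ..
    ultimately show ?thesis
      using True by simp
  next
    case False
    have indep_Y: "indep_vars (\<lambda>_. borel) Y I"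
      by (rule indep_vars_compose2[OF indep, of "\<lambda>m x. x - expectation (X m)", folded Y_def]) simp
    have int_Y: "integrable M (Y m)" and mean_Y: "expectation (Y m) = 0" if "m \<in> I" for m
      using int[OF that] by (simp_all add: Y_def[abs_def] prob_space)
    show ?thesis
      using expectation_mult_indep_vars[OF indep_Y assms(2,3) False int_Y int_Y] assms(2,3) mean_Y False
      by simp
  qed
  then show "integrable M (\<lambda>\<omega>. (X i \<omega> - expectation (X i)) * (X l \<omega> - expectation (X l)))"
    and "expectation (\<lambda>\<omega>. (X i \<omega> - expectation (X i)) * (X l \<omega> - expectation (X l)))
      = (if i = l then variance (X i) else 0)"
    by (simp_all add: Y_def)
qed

lemma (in prob_space) variance_sum_indep_vars:
  fixes X :: "'i \<Rightarrow> 'a \<Rightarrow> real"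
  assumes "finite I" and indep: "indep_vars (\<lambda>_. borel) X I"
    and square_int: "\<And>i. i \<in> I \<Longrightarrow> integrable M (\<lambda>\<omega>. (X i \<omega>)\<^sup>2)"
  shows "variance (\<lambda>\<omega>. \<Sum>i\<in>I. w i * X i \<omega>) = (\<Sum>i\<in>I. (w i)\<^sup>2 * variance (X i))"
proof -
  define Y where "Y i \<omega> = X i \<omega> - expectation (X i)" for i \<omega>
  have covariance: "integrable M (\<lambda>\<omega>. Y i \<omega> * Y l \<omega>)"
      "expectation (\<lambda>\<omega>. Y i \<omega> * Y l \<omega>) = (if i = l then variance (X i) else 0)"
    if "i \<in> I" "l \<in> I" for i l
    unfolding Y_def using covariance_indep_vars[OF indep that square_int] by blast+
  have "integrable M (X i)" if "i \<in> I" for i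
    using indep_vars_square_integrable_imp_integrable[OF indep that square_int[OF that]] .
  then have "expectation (\<lambda>\<omega>. \<Sum>i\<in>I. w i * X i \<omega>) = (\<Sum>i\<in>I. w i * expectation (X i))"
    by (simp add: Bochner_Integration.integral_sum)
  then have centred: "(\<Sum>i\<in>I. w i * X i \<omega>) - expectation (\<lambda>\<omega>. \<Sum>i\<in>I. w i * X i \<omega>)
      = (\<Sum>i\<in>I. w i * Y i \<omega>)" for \<omega>
    by (simp add: Y_def right_diff_distrib sum_subtractf)
  have expand: "(\<Sum>i\<in>I. w i * Y i \<omega>)\<^sup>2 = (\<Sum>i\<in>I. \<Sum>l\<in>I. (w i * w l) * (Y i \<omega> * Y l \<omega>))" for \<omega>
    by (simp add: power2_eq_square sum_product mult_ac)
  have "variance (\<lambda>\<omega>. \<Sum>i\<in>I. w i * X i \<omega>)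
      = expectation (\<lambda>\<omega>. \<Sum>i\<in>I. \<Sum>l\<in>I. (w i * w l) * (Y i \<omega> * Y l \<omega>))"
    by (simp only: centred expand)
  also have "\<dots> = (\<Sum>i\<in>I. \<Sum>l\<in>I. (w i * w l) * expectation (\<lambda>\<omega>. Y i \<omega> * Y l \<omega>))"
    using covariance by (simp add: Bochner_Integration.integral_sum)
  also have "\<dots> = (\<Sum>i\<in>I. \<Sum>l\<in>I. if i = l then (w i)\<^sup>2 * variance (X i) else 0)"
    using covariance by (intro sum.cong refl) (simp add: power2_eq_square)
  finally show ?thesis
    using \<open>finite I\<close> by simp
qed

lemma (in prob_space) moments_weighted_sum_signal_noise:
  fixes X :: "nat \<Rightarrow> 'a \<Rightarrow> real"
  assumes indep: "indep_vars (\<lambda>_. borel) X {0..k}"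
    and square_int: "\<And>m. m \<in> {0..k} \<Longrightarrow> integrable M (\<lambda>\<omega>. (X m \<omega>)\<^sup>2)"
    and noise_mean: "\<And>m. m \<in> {1..k} \<Longrightarrow> expectation (X m) = 0"
    and noise_variance: "\<And>m. m \<in> {1..k} \<Longrightarrow> variance (X m) = s"
  shows "expectation (\<lambda>\<omega>. \<Sum>m\<in>{0..k}. w m * X m \<omega>) = w 0 * expectation (X 0)"
    and "variance (\<lambda>\<omega>. \<Sum>m\<in>{0..k}. w m * X m \<omega>) = (w 0)\<^sup>2 * variance (X 0) + (\<Sum>m\<in>{1..k}. (w m)\<^sup>2) * s"
proof -
  have "integrable M (X m)" if "m \<in> {0..k}" for m
    using indep_vars_square_integrable_imp_integrable[OF indep that square_int[OF that]] .
  then have "expectation (\<lambda>\<omega>. \<Sum>m\<in>{0..k}. w m * X m \<omega>) = (\<Sum>m\<in>{0..k}. w m * expectation (X m))"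
    by (simp add: Bochner_Integration.integral_sum)
  then show "expectation (\<lambda>\<omega>. \<Sum>m\<in>{0..k}. w m * X m \<omega>) = w 0 * expectation (X 0)"
    using noise_mean by (simp add: sum.atLeast_Suc_atMost[OF le0])
  have "variance (\<lambda>\<omega>. \<Sum>m\<in>{0..k}. w m * X m \<omega>) = (\<Sum>m\<in>{0..k}. (w m)\<^sup>2 * variance (X m))"
    by (rule variance_sum_indep_vars[OF _ indep square_int]) simp
  then show "variance (\<lambda>\<omega>. \<Sum>m\<in>{0..k}. w m * X m \<omega>) = (w 0)\<^sup>2 * variance (X 0) + (\<Sum>m\<in>{1..k}. (w m)\<^sup>2) * s"
    using noise_variance by (simp add: sum.atLeast_Suc_atMost[OF le0] sum_distrib_right)
qed

lemma la_inner_closed_form: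
  "la_inner \<gamma> a c \<phi> i \<omega> j = (1 - \<gamma> * a j) ^ i * \<phi> \<omega> j
     + (\<Sum>m\<in>{1..i}. (1 - \<gamma> * a j) ^ (i - m) * (\<gamma> * a j) * c m \<omega> j)"
proof (induction i)
  case 0
  then show ?case by simp
next
  case (Suc i)
  let ?b = "1 - \<gamma> * a j"
  have "la_inner \<gamma> a c \<phi> (Suc i) \<omega> j = ?b * la_inner \<gamma> a c \<phi> i \<omega> j + \<gamma> * a j * c (Suc i) \<omega> j"
    by (simp add: algebra_simps)
  also have "\<dots> = ?b ^ Suc i * \<phi> \<omega> j
     + ((\<Sum>m\<in>{1..i}. ?b ^ (Suc i - m) * (\<gamma> * a j) * c m \<omega> j) + \<gamma> * a j * c (Suc i) \<omega> j)"
    unfolding Suc by (simp add: algebra_simps sum_distrib_left Suc_diff_le)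
  also have "\<dots> = ?b ^ Suc i * \<phi> \<omega> j
     + (\<Sum>m\<in>{1..Suc i}. ?b ^ (Suc i - m) * (\<gamma> * a j) * c m \<omega> j)"
    by (simp add: sum.cl_ivl_Suc)
  finally show ?case .
qed

lemma la_step_closed_form:
  "la_step \<alpha> \<gamma> a c \<phi> k \<omega> j = ((1 - \<alpha>) + \<alpha> * (1 - \<gamma> * a j) ^ k) * \<phi> \<omega> j
     + (\<Sum>m\<in>{1..k}. \<alpha> * (1 - \<gamma> * a j) ^ (k - m) * \<gamma> * a j * c m \<omega> j)"
  unfolding la_step_def la_inner_closed_form by (simp add: algebra_simps sum_distrib_left)

lemma (in prob_space) la_step_moments:
  fixes \<phi> :: "'a \<Rightarrow> 'n::finite \<Rightarrow> real"
  assumes gauss: "\<And>i. i \<in> {1..k} \<Longrightarrow> distr M (PiM UNIV (\<lambda>_. borel)) (c i) = gauss_diag \<sigma>"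
    and "\<And>j. \<sigma> j \<ge> 0"
    and indep_vectors: "indep_vars (\<lambda>_. PiM UNIV (\<lambda>_::'n. borel)) (\<lambda>i. if i = 0 then \<phi> else c i) {0..k}"
    and "integrable M (\<lambda>\<omega>. (\<phi> \<omega> j)\<^sup>2)"
  shows "expectation (\<lambda>\<omega>. la_step \<alpha> \<gamma> a c \<phi> k \<omega> j)
      = ((1 - \<alpha>) + \<alpha> * (1 - \<gamma> * a j) ^ k) * expectation (\<lambda>\<omega>. \<phi> \<omega> j)"
    and "variance (\<lambda>\<omega>. la_step \<alpha> \<gamma> a c \<phi> k \<omega> j)
      = ((1 - \<alpha>) + \<alpha> * (1 - \<gamma> * a j) ^ k)\<^sup>2 * variance (\<lambda>\<omega>. \<phi> \<omega> j)
        + \<alpha>\<^sup>2 * (\<Sum>i<k. (1 - \<gamma> * a j) ^ (2 * i) * \<gamma>\<^sup>2 * (a j)\<^sup>2 * \<sigma> j)"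
proof -
  define b where "b = 1 - \<gamma> * a j"
  define X where "X = (\<lambda>m \<omega>. (if m = 0 then \<phi> else c m) \<omega> j)"
  define w where "w = (\<lambda>m. if m = 0 then (1 - \<alpha>) + \<alpha> * b ^ k else \<alpha> * b ^ (k - m) * \<gamma> * a j)"
  have noise_vector: "c m \<in> measurable M (PiM UNIV (\<lambda>_. borel))" if "m \<in> {1..k}" for m
    using indep_vectors that by (auto simp: indep_vars_def dest!: bspec[where x = m])
  have indep: "indep_vars (\<lambda>_. borel) X {0..k}"
    unfolding X_def by (rule indep_vars_compose2[OF indep_vectors]) simp
  have noise: "expectation (X m) = 0" "integrable M (\<lambda>\<omega>. (X m \<omega>)\<^sup>2)" "variance (X m) = \<sigma> j"
    if "m \<in> {1..k}" for m
    using gauss_diag_component_moments[OF noise_vector[OF that] gauss[OF that] assms(2)] that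
    by (auto simp: X_def)
  have square_int: "integrable M (\<lambda>\<omega>. (X m \<omega>)\<^sup>2)" if "m \<in> {0..k}" for m
    using noise(2)[of m] assms(4) that by (cases "m = 0") (auto simp: X_def)
  have step: "la_step \<alpha> \<gamma> a c \<phi> k \<omega> j = (\<Sum>m\<in>{0..k}. w m * X m \<omega>)" for \<omega>
    unfolding la_step_closed_form sum.atLeast_Suc_atMost[OF le0]
    by (simp add: w_def X_def b_def mult.assoc)
  have noise_sum: "(\<Sum>m\<in>{1..k}. (w m)\<^sup>2) * \<sigma> j = \<alpha>\<^sup>2 * (\<Sum>i<k. b ^ (2 * i) * \<gamma>\<^sup>2 * (a j)\<^sup>2 * \<sigma> j)"
    unfolding sum_distrib_left sum_distrib_right
    by (rule sum.reindex_bij_witness[of _ "\<lambda>i. k - i" "\<lambda>m. k - m"])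
      (auto simp: w_def power_mult_distrib power_mult[symmetric] mult_ac)
  note moments = moments_weighted_sum_signal_noise[OF indep square_int noise(1) noise(3), of w]
  have "expectation (\<lambda>\<omega>. la_step \<alpha> \<gamma> a c \<phi> k \<omega> j) = w 0 * expectation (X 0)"
    unfolding step by (rule moments(1))
  then show "expectation (\<lambda>\<omega>. la_step \<alpha> \<gamma> a c \<phi> k \<omega> j)
      = ((1 - \<alpha>) + \<alpha> * (1 - \<gamma> * a j) ^ k) * expectation (\<lambda>\<omega>. \<phi> \<omega> j)"
    by (simp add: w_def X_def b_def)
  have "variance (\<lambda>\<omega>. la_step \<alpha> \<gamma> a c \<phi> k \<omega> j)
      = (w 0)\<^sup>2 * variance (X 0) + (\<Sum>m\<in>{1..k}. (w m)\<^sup>2) * \<sigma> j"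
    unfolding step by (rule moments(2))
  then show "variance (\<lambda>\<omega>. la_step \<alpha> \<gamma> a c \<phi> k \<omega> j)
      = ((1 - \<alpha>) + \<alpha> * (1 - \<gamma> * a j) ^ k)\<^sup>2 * variance (\<lambda>\<omega>. \<phi> \<omega> j)
        + \<alpha>\<^sup>2 * (\<Sum>i<k. (1 - \<gamma> * a j) ^ (2 * i) * \<gamma>\<^sup>2 * (a j)\<^sup>2 * \<sigma> j)"
    unfolding noise_sum by (simp add: w_def X_def b_def)
qed

theorem lemma1:
  fixes M :: "'a measure"
    and a \<sigma> :: "'n::finite \<Rightarrow> real"
    and \<gamma> \<alpha> :: real and k :: nat
    and \<phi> :: "'a \<Rightarrow> 'n \<Rightarrow> real"
    and c :: "nat \<Rightarrow> 'a \<Rightarrow> 'n \<Rightarrow> real"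
  assumes "prob_space M"
    and "\<And>j. a j > 0"
    and "\<And>j. \<sigma> j \<ge> 0"
    and "\<gamma> > 0" and "k \<ge> 1" and "0 < \<alpha>" and "\<alpha> \<le> 1"
    and "\<And>i. i \<in> {1..k} \<Longrightarrow> distr M (PiM UNIV (\<lambda>_. borel)) (c i) = gauss_diag \<sigma>"
    and "prob_space.indep_vars M (\<lambda>_. PiM UNIV (\<lambda>_::'n. borel))
           (\<lambda>i. if i = 0 then \<phi> else c i) {0..k}"
    and "\<And>j. integrable M (\<lambda>\<omega>. (\<phi> \<omega> j)^2)"
  shows "\<forall>j. prob_space.expectation M (\<lambda>\<omega>. la_step \<alpha> \<gamma> a c \<phi> k \<omega> j)
              = ((1 - \<alpha>) + \<alpha> * (1 - \<gamma> * a j) ^ k) * prob_space.expectation M (\<lambda>\<omega>. \<phi> \<omega> j)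
         \<and> prob_space.variance M (\<lambda>\<omega>. la_step \<alpha> \<gamma> a c \<phi> k \<omega> j)
              = ((1 - \<alpha>) + \<alpha> * (1 - \<gamma> * a j) ^ k)^2 * prob_space.variance M (\<lambda>\<omega>. \<phi> \<omega> j)
                + \<alpha>^2 * (\<Sum>i<k. (1 - \<gamma> * a j) ^ (2 * i) * \<gamma>^2 * (a j)^2 * \<sigma> j)"
  using prob_space.la_step_moments[OF assms(1) assms(8) assms(3) assms(9) assms(10)] by blast

end
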